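(* Let $n\ge1$ and $d\ge1$. The space $V^n_d$ of divergence-free vector fields in $F^n_d$ has a basis consisting of (i) the $n\dim P^{n-1}_d$ vector monomials $p_{i,m}=\xi^m\hat e_i$ with $1\le i\le n$, $m\in\mathbb{N}^n$, $|m|=d$ and $m_i=0$; and (ii) the $(n-1)\dim P^n_{d-1}$ vector fields $$v_{i,m}=\xi^m\big[(1+m_{i+1})\,\xi_i\hat e_i-(1+m_i)\,\xi_{i+1}\hat e_{i+1}\big],\qquad 1\le i\le n-1,\ m\in\mathbb{N}^n,\ |m|=d-1 .$$
   Context: For $\xi\in\mathbb{R}^n$ and $m\in\mathbb{N}^n$, $\xi^m=\xi_1^{m_1}\cdots\xi_n^{m_n}$ and $|m|=\sum_i m_i$. $P^n_d$ is the space of real homogeneous polynomials of degree $d$ in $n$ variables (so $\dim P^n_d=\binom{n+d-1}{d}$). $F^n_d$ is the space of vector fields $h:\mathbb{R}^n\to\mathbb{R}^n$ each of whose components lies in $P^n_d$, and $V^n_d=\{v\in F^n_d:\nabla\cdot v=0\}$. $\hat e_i$ is the $i$-th standard basis vector. *)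

theory Defs
  imports Complex_Main
begin

text \<open>Coordinates are indexed 0..n-1 (0-based). A multi-index is a
function m :: nat => nat vanishing outside {0..<n}. A homogeneous polynomial
vector field of degree d is given by its coefficients: F i m is the coefficient
of the monomial xi^m in the i-th component.\<close>

type_synonym mindex = "nat \<Rightarrow> nat"
type_synonym vfield = "nat \<Rightarrow> mindex \<Rightarrow> real"

definition mi :: "nat \<Rightarrow> nat \<Rightarrow> mindex set" where
  "mi n d = {m. (\<forall>j. n \<le> j \<longrightarrow> m j = 0) \<and> (\<Sum>j<n. m j) = d}"

definition dimP :: "nat \<Rightarrow> nat \<Rightarrow> nat" where
  "dimP n d = (n + d - 1) choose d"

definition Fd :: "nat \<Rightarrow> nat \<Rightarrow> vfield set" where
  "Fd n d = {F. \<forall>i m. F i m \<noteq> 0 \<longrightarrow> i < n \<and> m \<in> mi n d}"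

text \<open>Coefficient of xi^k in the divergence of F (formal differentiation:
 d/dxi_i xi^m = m_i xi^(m - e_i)).\<close>
definition divg :: "nat \<Rightarrow> vfield \<Rightarrow> mindex \<Rightarrow> real" where
  "divg n F k = (\<Sum>i<n. real (k i + 1) * F i (k(i := k i + 1)))"

definition Vd :: "nat \<Rightarrow> nat \<Rightarrow> vfield set" where
  "Vd n d = {F \<in> Fd n d. \<forall>k. divg n F k = 0}"

definition pvec :: "nat \<Rightarrow> mindex \<Rightarrow> vfield" where
  "pvec i m = (\<lambda>j k. if j = i \<and> k = m then 1 else 0)"

definition vvec :: "nat \<Rightarrow> mindex \<Rightarrow> vfield" where
  "vvec i m = (\<lambda>j k.
      (if j = i \<and> k = m(i := m i + 1) then real (1 + m (i+1)) else 0)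
    - (if j = i + 1 \<and> k = m(i+1 := m (i+1) + 1) then real (1 + m i) else 0))"

definition I1 :: "nat \<Rightarrow> nat \<Rightarrow> (nat \<times> mindex) set" where
  "I1 n d = {(i, m). i < n \<and> m \<in> mi n d \<and> m i = 0}"

definition I2 :: "nat \<Rightarrow> nat \<Rightarrow> (nat \<times> mindex) set" where
  "I2 n d = {(i, m). i + 1 < n \<and> m \<in> mi n (d - 1)}"

definition represents :: "nat \<Rightarrow> nat \<Rightarrow> vfield \<Rightarrow>
    ((nat \<times> mindex) \<Rightarrow> real) \<Rightarrow> ((nat \<times> mindex) \<Rightarrow> real) \<Rightarrow> bool" where
  "represents n d F c1 c2 \<longleftrightarrow>
     (\<forall>x. x \<notin> I1 n d \<longrightarrow> c1 x = 0) \<and> (\<forall>x. x \<notin> I2 n d \<longrightarrow> c2 x = 0) \<and>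
     (\<forall>j k. F j k = (\<Sum>x\<in>I1 n d. c1 x * pvec (fst x) (snd x) j k)
                   + (\<Sum>x\<in>I2 n d. c2 x * vvec (fst x) (snd x) j k))"

end

theory Submission
  imports Defs "HOL-Combinatorics.Permutations"
begin

text \<open>Write \<open>F j k\<close> for the coefficient of \<open>\<xi>^k e_j\<close>. The coefficients with \<open>k_j = 0\<close> do not
occur in the divergence; they are exactly the coordinates along the monomials \<open>p_{i,m}\<close>. The
remaining ones are \<open>F j (m + e_j)\<close> with \<open>|m| = d - 1\<close>, and for each such \<open>m\<close> the only
constraint on them is the coefficient of \<open>\<xi>^m\<close> in the divergence,
\<open>\<Sum>_j (m_j + 1) F j (m + e_j) = 0\<close>. A combination \<open>\<Sum> c_{i,m} v_{i,m}\<close> has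
\<open>(m_j + 1) F j (m + e_j) = a_j - a_{j-1}\<close>, where \<open>a_i = c_{i,m} (m_i + 1) (m_{i+1} + 1)\<close> and
\<open>a_{-1} = a_{n-1} = 0\<close>. This telescoping system forces \<open>a_i\<close> to be the partial sums of the
divergence, and it is solvable precisely because the full sum vanishes.\<close>

text \<open>\<open>bump m i = m + e_i\<close> is written with \<open>Suc\<close>, the simp normal form of the \<open>m i + 1\<close> in the
definitions, so that lemmas stated with \<open>bump\<close> still apply after simplification.\<close>

abbreviation bump :: "mindex \<Rightarrow> nat \<Rightarrow> mindex" where
  "bump m i \<equiv> m(i := Suc (m i))"

lemma bij_betw_mi_lists:
  "bij_betw (\<lambda>m. map m [0..<n]) (mi n d) {l. length l = n \<and> sum_list l = d}"
proof (rule bij_betw_byWitness[where f' = "\<lambda>l j. if j < n then l ! j else 0"])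
  show "\<forall>m\<in>mi n d. (\<lambda>j. if j < n then map m [0..<n] ! j else 0) = m"
    by (auto simp: mi_def fun_eq_iff)
  show "\<forall>l\<in>{l. length l = n \<and> sum_list l = d}. map (\<lambda>j. if j < n then l ! j else 0) [0..<n] = l"
    by (auto intro: nth_equalityI)
qed (auto simp: mi_def sum_list_sum_nth atLeast0LessThan)

lemma finite_mi: "finite (mi n d)"
proof -
  have "{l. length l = n \<and> sum_list l = d} \<subseteq> {l. set l \<subseteq> {..d} \<and> length l = n}"
    using member_le_sum_list by fastforce
  then have "finite {l::nat list. length l = n \<and> sum_list l = d}"
    by (rule finite_subset) (simp add: finite_lists_length_eq)
  then show ?thesis
    using bij_betw_finite[OF bij_betw_mi_lists] by blast
qed

lemma card_mi: "card (mi n d) = (n + d - 1) choose d"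
  using bij_betw_same_card[OF bij_betw_mi_lists] card_length_sum_list
  by (simp add: add.commute)

lemma comp_permutes_in_mi:
  assumes "p permutes {..<n}"
  shows "m \<circ> p \<in> mi n d \<longleftrightarrow> m \<in> mi n d"
proof -
  have "(\<forall>j\<ge>n. m (p j) = 0) \<longleftrightarrow> (\<forall>j\<ge>n. m j = 0)"
    using permutes_not_in[OF assms] by auto
  moreover have "(\<Sum>j<n. m (p j)) = (\<Sum>j<n. m j)"
    using sum.permute[OF assms, of m] by simp
  ultimately show ?thesis by (simp add: mi_def)
qed

lemma mi_pred_eq:
  assumes "n \<ge> 1"
  shows "mi (n - 1) d = {m \<in> mi n d. m (n - 1) = 0}"
proof -
  have "{..<n} = insert (n - 1) {..<n - 1}"
    using assms by auto
  then have sum: "(\<Sum>j<n. m j) = m (n - 1) + (\<Sum>j<n - 1. m j)" for m :: mindex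
    by simp
  have "n - 1 \<le> j \<longleftrightarrow> j = n - 1 \<or> n \<le> j" for j
    using assms by auto
  then have "(\<forall>j\<ge>n - 1. m j = 0) \<longleftrightarrow> (\<forall>j\<ge>n. m j = 0) \<and> m (n - 1) = 0" for m :: mindex
    by auto
  then show ?thesis
    using sum by (auto simp: mi_def)
qed

lemma card_mi_vanishing:
  assumes "i < n"
  shows "card {m \<in> mi n d. m i = 0} = card (mi (n - 1) d)"
proof -
  define l where "l = n - 1"
  let ?t = "transpose i l"
  have t: "?t permutes {..<n}"
    using assms by (intro permutes_swap_id) (auto simp: l_def)
  have "bij_betw (\<lambda>m. m \<circ> ?t) {m \<in> mi n d. m i = 0} {m \<in> mi n d. m l = 0}"
    by (rule bij_betw_byWitness[where f' = "\<lambda>m. m \<circ> ?t"])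
       (auto simp: comp_permutes_in_mi[OF t] fun_eq_iff)
  then show ?thesis
    using bij_betw_same_card mi_pred_eq[of n d] assms by (simp add: l_def)
qed

lemma bump_inject [simp]: "bump m i = bump m' i \<longleftrightarrow> m = m'"
  by (auto simp: fun_eq_iff)

lemma bump_in_mi_iff:
  assumes "i < n"
  shows "bump m i \<in> mi n (Suc e) \<longleftrightarrow> m \<in> mi n e"
proof -
  have "(\<Sum>j<n. bump m i j) = (\<Sum>j<n. m j + (if j = i then 1 else 0))"
    by (intro sum.cong) auto
  also have "\<dots> = Suc (\<Sum>j<n. m j)"
    using assms by (simp add: sum.distrib)
  finally show ?thesis
    using assms by (auto simp: mi_def)
qed

lemma mindex_cases:
  obtains "k i = 0" | m where "k = bump m i"
  by (metis Suc_pred' fun_upd_triv fun_upd_upd fun_upd_same not_gr0)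

lemma I1_eq: "I1 n d = Sigma {..<n} (\<lambda>i. {m \<in> mi n d. m i = 0})"
  by (auto simp: I1_def)

lemma I2_eq: "I2 n d = {..<n - 1} \<times> mi n (d - 1)"
  by (auto simp: I2_def)

lemma finite_I1: "finite (I1 n d)"
  unfolding I1_eq using finite_mi by auto

lemma finite_I2: "finite (I2 n d)"
  unfolding I2_eq using finite_mi by auto

lemma card_I1: "card (I1 n d) = n * dimP (n - 1) d"
proof -
  have "card (I1 n d) = (\<Sum>i<n. card {m \<in> mi n d. m i = 0})"
    unfolding I1_eq using finite_mi by (intro card_SigmaI) auto
  also have "\<dots> = n * card (mi (n - 1) d)"
    by (simp add: card_mi_vanishing)
  finally show ?thesis
    by (simp add: card_mi dimP_def)
qed

lemma card_I2: "card (I2 n d) = (n - 1) * dimP n (d - 1)"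
  unfolding I2_eq using finite_mi by (simp add: card_cartesian_product card_mi dimP_def)

lemma pvec_in_Vd:
  assumes "(i, m) \<in> I1 n d"
  shows "pvec i m \<in> Vd n d"
proof -
  have "pvec i m l (bump k l) = 0" for k l
    using assms by (auto simp: pvec_def I1_def)
  then have "divg n (pvec i m) k = 0" for k
    by (simp add: divg_def)
  moreover have "pvec i m \<in> Fd n d"
    using assms by (auto simp: Fd_def pvec_def I1_def)
  ultimately show ?thesis
    by (simp add: Vd_def)
qed

lemma vvec_vanishing: "k j = 0 \<Longrightarrow> vvec i m j k = 0"
  by (auto simp: vvec_def)

lemma vvec_bump:
  "vvec i m j (bump m' j) =
     (if m' = m \<and> j = i then real (1 + m (Suc i)) else 0)
   - (if m' = m \<and> j = Suc i then real (1 + m i) else 0)"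
  by (auto simp: vvec_def)

lemma vvec_in_Vd:
  assumes "(i, m) \<in> I2 n d" and "d \<ge> 1"
  shows "vvec i m \<in> Vd n d"
proof -
  have i: "Suc i < n" and m: "m \<in> mi n (d - 1)"
    using assms by (auto simp: I2_def)
  have d: "d = Suc (d - 1)"
    using assms by simp
  have "j < n \<and> k \<in> mi n d" if nz: "vvec i m j k \<noteq> 0" for j k
  proof (cases k j rule: mindex_cases)
    case 1
    then show ?thesis using nz vvec_vanishing by blast
  next
    case (2 m')
    then have "m' = m" and "j = i \<or> j = Suc i"
      using nz by (auto simp: vvec_bump split: if_splits)
    then show ?thesis
      using 2 i m d bump_in_mi_iff by (metis Suc_lessD)
  qed
  then have "vvec i m \<in> Fd n d"
    by (auto simp: Fd_def)
  moreover have "divg n (vvec i m) k = 0" for k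
  proof -
    have "divg n (vvec i m) k =
        (\<Sum>l<n. (if k = m \<and> l = i then real (m i + 1) * real (1 + m (Suc i)) else 0)
               - (if k = m \<and> l = Suc i then real (m (Suc i) + 1) * real (1 + m i) else 0))"
      unfolding divg_def by (intro sum.cong) (auto simp: vvec_bump algebra_simps)
    also have "\<dots> = (if k = m then real (m i + 1) * real (1 + m (Suc i))
                                  - real (m (Suc i) + 1) * real (1 + m i) else 0)"
      using i by (simp add: sum_subtractf)
    also have "\<dots> = 0"
      by simp
    finally show ?thesis .
  qed
  ultimately show ?thesis
    by (simp add: Vd_def)
qed

lemma sum_pvec:
  "(\<Sum>x\<in>I1 n d. c x * pvec (fst x) (snd x) j k) = (if (j, k) \<in> I1 n d then c (j, k) else 0)"
proof -
  have "(\<Sum>x\<in>I1 n d. c x * pvec (fst x) (snd x) j k) = (\<Sum>x\<in>I1 n d. if x = (j, k) then c x else 0)"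
    by (intro sum.cong) (auto simp: pvec_def)
  then show ?thesis
    using finite_I1 by simp
qed

lemma sum_vvec_bump:
  assumes "\<forall>x. x \<notin> I2 n d \<longrightarrow> c x = 0"
  shows "(\<Sum>x\<in>I2 n d. c x * vvec (fst x) (snd x) j (bump m j)) =
    c (j, m) * real (1 + m (Suc j)) - (if j = 0 then 0 else c (j - 1, m) * real (1 + m (j - 1)))"
proof -
  have "(\<Sum>x\<in>I2 n d. c x * vvec (fst x) (snd x) j (bump m j)) =
      (\<Sum>x\<in>I2 n d. (if x = (j, m) then c x * real (1 + m (Suc j)) else 0)
                    - (if x = (j - 1, m) then if j = 0 then 0 else c x * real (1 + m (j - 1)) else 0))"
    by (intro sum.cong) (auto simp: vvec_bump right_diff_distrib)
  also have "\<dots> = (if (j, m) \<in> I2 n d then c (j, m) * real (1 + m (Suc j)) else 0)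
      - (if (j - 1, m) \<in> I2 n d then if j = 0 then 0 else c (j - 1, m) * real (1 + m (j - 1)) else 0)"
    using finite_I2 by (simp only: sum_subtractf sum.delta)
  finally show ?thesis
    using assms by (simp split: if_splits)
qed

lemma partial_sums_iff:
  fixes a f :: "nat \<Rightarrow> 'a::ab_group_add"
  shows "(\<forall>j<n. f j = a j - (if j = 0 then 0 else a (j - 1))) \<longleftrightarrow> (\<forall>j<n. a j = (\<Sum>l<Suc j. f l))"
proof safe
  fix j assume h: "\<forall>j<n. f j = a j - (if j = 0 then 0 else a (j - 1))" and "j < n"
  from \<open>j < n\<close> show "a j = (\<Sum>l<Suc j. f l)"
  proof (induction j)
    case 0
    then show ?case using h by simp
  next
    case (Suc j)
    then show ?case
      using h[rule_format, of "Suc j"] by (simp add: algebra_simps)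
  qed
next
  fix j assume h: "\<forall>j<n. a j = (\<Sum>l<Suc j. f l)" and "j < n"
  then show "f j = a j - (if j = 0 then 0 else a (j - 1))"
    by (cases j) auto
qed

lemma all_less_iff_all_Suc_less:
  assumes "0 < n \<Longrightarrow> P (n - 1)"
  shows "(\<forall>j<n. P j) \<longleftrightarrow> (\<forall>j. Suc j < n \<longrightarrow> P j)"
proof -
  have "P j" if "j < n" and "\<forall>j. Suc j < n \<longrightarrow> P j" for j
  proof (cases "Suc j < n")
    case False
    with \<open>j < n\<close> have "j = n - 1"
      by simp
    with \<open>j < n\<close> show ?thesis
      using assms by simp
  qed (use that in blast)
  then show ?thesis
    using Suc_lessD by blast
qed

definition partial_div :: "vfield \<Rightarrow> mindex \<Rightarrow> nat \<Rightarrow> real" where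
  "partial_div F m i = (\<Sum>l<i. real (m l + 1) * F l (bump m l))"

lemma divg_eq_partial_div: "divg n F k = partial_div F k n"
  by (simp add: divg_def partial_div_def)

lemma bump_equations_iff:
  assumes c: "\<forall>j. n \<le> Suc j \<longrightarrow> c (j, m) = 0" and div: "partial_div F m n = 0"
  shows "(\<forall>j<n. F j (bump m j) =
            c (j, m) * real (1 + m (Suc j)) - (if j = 0 then 0 else c (j - 1, m) * real (1 + m (j - 1))))
    \<longleftrightarrow> (\<forall>j. Suc j < n \<longrightarrow>
            c (j, m) = partial_div F m (Suc j) / (real (m j + 1) * real (m (Suc j) + 1)))"
    (is "?lhs \<longleftrightarrow> ?rhs")
proof -
  define r where "r j = c (j, m) * real (1 + m (Suc j))
                      - (if j = 0 then 0 else c (j - 1, m) * real (1 + m (j - 1)))" for j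
  define a where "a j = c (j, m) * real (m j + 1) * real (m (Suc j) + 1)" for j
  define f where "f j = real (m j + 1) * F j (bump m j)" for j
  have scaled: "real (m j + 1) * r j = a j - (if j = 0 then 0 else a (j - 1))" for j
    by (cases j) (simp_all add: r_def a_def algebra_simps)
  have "F j (bump m j) = r j \<longleftrightarrow> real (m j + 1) * F j (bump m j) = real (m j + 1) * r j" for j
    by (simp del: of_nat_Suc)
  then have "?lhs \<longleftrightarrow> (\<forall>j<n. f j = a j - (if j = 0 then 0 else a (j - 1)))"
    by (simp only: r_def [symmetric] f_def scaled)
  also have "\<dots> \<longleftrightarrow> (\<forall>j<n. a j = (\<Sum>l<Suc j. f l))"
    by (rule partial_sums_iff)
  also have "\<dots> \<longleftrightarrow> (\<forall>j<n. a j = partial_div F m (Suc j))"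
    by (simp only: f_def partial_div_def)
  also have "\<dots> \<longleftrightarrow> (\<forall>j. Suc j < n \<longrightarrow> a j = partial_div F m (Suc j))"
    using c div by (intro all_less_iff_all_Suc_less) (simp add: a_def)
  also have "\<dots> \<longleftrightarrow> ?rhs"
  proof -
    have "a j = q \<longleftrightarrow> c (j, m) = q / (real (m j + 1) * real (m (Suc j) + 1))" for j q
      by (simp add: a_def eq_divide_eq mult.assoc del: of_nat_Suc)
    then show ?thesis
      by presburger
  qed
  finally show ?thesis .
qed

definition pcoeff :: "nat \<Rightarrow> nat \<Rightarrow> vfield \<Rightarrow> nat \<times> mindex \<Rightarrow> real" where
  "pcoeff n d F x = (if x \<in> I1 n d then F (fst x) (snd x) else 0)"

definition vcoeff :: "nat \<Rightarrow> nat \<Rightarrow> vfield \<Rightarrow> nat \<times> mindex \<Rightarrow> real" where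
  "vcoeff n d F x = (if x \<in> I2 n d
     then partial_div F (snd x) (Suc (fst x)) / (real (snd x (fst x) + 1) * real (snd x (Suc (fst x)) + 1))
     else 0)"

lemma represents_iff_equations:
  assumes F: "F \<in> Fd n d" and d: "d \<ge> 1"
    and c1: "\<forall>x. x \<notin> I1 n d \<longrightarrow> c1 x = 0" and c2: "\<forall>x. x \<notin> I2 n d \<longrightarrow> c2 x = 0"
  shows "represents n d F c1 c2 \<longleftrightarrow>
    (\<forall>(j, k) \<in> I1 n d. c1 (j, k) = F j k) \<and>
    (\<forall>m \<in> mi n (d - 1). \<forall>j<n. F j (bump m j) =
       c2 (j, m) * real (1 + m (Suc j)) - (if j = 0 then 0 else c2 (j - 1, m) * real (1 + m (j - 1))))"
    (is "_ \<longleftrightarrow> ?rhs")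
proof -
  define eq where "eq j k \<longleftrightarrow> F j k = (if (j, k) \<in> I1 n d then c1 (j, k) else 0)
                          + (\<Sum>x\<in>I2 n d. c2 x * vvec (fst x) (snd x) j k)" for j k
  have F0: "F j k = 0" if "\<not> (j < n \<and> k \<in> mi n d)" for j k
    using F that by (auto simp: Fd_def)
  have vanishing: "eq j k \<longleftrightarrow> ((j, k) \<in> I1 n d \<longrightarrow> c1 (j, k) = F j k)" if "k j = 0" for j k
    using that F0[of j k] by (auto simp: eq_def vvec_vanishing I1_def)
  have bumped: "eq j (bump m j) \<longleftrightarrow> (m \<in> mi n (d - 1) \<longrightarrow> j < n \<longrightarrow> F j (bump m j) =
       c2 (j, m) * real (1 + m (Suc j)) - (if j = 0 then 0 else c2 (j - 1, m) * real (1 + m (j - 1))))"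
    for j m
  proof (cases "j < n \<and> m \<in> mi n (d - 1)")
    case True
    then show ?thesis
      using c2 by (simp add: eq_def sum_vvec_bump I1_def)
  next
    case False
    then have "F j (bump m j) = 0"
      using F0 bump_in_mi_iff[of j n m "d - 1"] d by force
    moreover have "c2 (j, m) = 0" and "c2 (j - 1, m) = 0 \<or> j = 0"
      using False c2 by (auto simp: I2_def)
    ultimately show ?thesis
      using False c2 by (auto simp: eq_def sum_vvec_bump I1_def)
  qed
  have "represents n d F c1 c2 \<longleftrightarrow> (\<forall>j k. eq j k)"
    using c1 c2 by (simp add: eq_def represents_def sum_pvec)
  also have "\<dots> \<longleftrightarrow> (\<forall>j k. k j = 0 \<longrightarrow> eq j k) \<and> (\<forall>j m. eq j (bump m j))"
    by (metis mindex_cases)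
  also have "\<dots> \<longleftrightarrow> ?rhs"
    using vanishing bumped by (auto simp: I1_def)
  finally show ?thesis .
qed

lemma represents_iff_coeffs:
  assumes F: "F \<in> Vd n d" and d: "d \<ge> 1"
  shows "represents n d F c1 c2 \<longleftrightarrow> c1 = pcoeff n d F \<and> c2 = vcoeff n d F"
proof (cases "(\<forall>x. x \<notin> I1 n d \<longrightarrow> c1 x = 0) \<and> (\<forall>x. x \<notin> I2 n d \<longrightarrow> c2 x = 0)")
  case False
  then show ?thesis
    by (auto simp: represents_def pcoeff_def vcoeff_def)
next
  case True
  then have c1: "\<forall>x. x \<notin> I1 n d \<longrightarrow> c1 x = 0" and c2: "\<forall>x. x \<notin> I2 n d \<longrightarrow> c2 x = 0"
    by auto
  have "F \<in> Fd n d" and div: "partial_div F m n = 0" for m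
    using F by (auto simp: Vd_def divg_eq_partial_div)
  have "c1 = pcoeff n d F \<longleftrightarrow> (\<forall>(j, k) \<in> I1 n d. c1 (j, k) = F j k)"
    using c1 by (auto simp: pcoeff_def fun_eq_iff)
  moreover have "c2 = vcoeff n d F \<longleftrightarrow> (\<forall>m \<in> mi n (d - 1). \<forall>j. Suc j < n \<longrightarrow>
      c2 (j, m) = partial_div F m (Suc j) / (real (m j + 1) * real (m (Suc j) + 1)))"
    using c2 by (auto simp: vcoeff_def fun_eq_iff I2_def)
  moreover have "\<forall>j. n \<le> Suc j \<longrightarrow> c2 (j, m) = 0" for m
    using c2 by (auto simp: I2_def)
  ultimately show ?thesis
    using represents_iff_equations[OF \<open>F \<in> Fd n d\<close> d c1 c2] bump_equations_iff[OF _ div]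
    by simp
qed

theorem lemma1:
  fixes n d :: nat
  assumes "n \<ge> 1" and "d \<ge> 1"
  shows "finite (I1 n d) \<and> finite (I2 n d)
    \<and> card (I1 n d) = n * dimP (n - 1) d
    \<and> card (I2 n d) = (n - 1) * dimP n (d - 1)
    \<and> (\<forall>(i, m) \<in> I1 n d. pvec i m \<in> Vd n d)
    \<and> (\<forall>(i, m) \<in> I2 n d. vvec i m \<in> Vd n d)
    \<and> (\<forall>F \<in> Vd n d. \<exists>!c. represents n d F (fst c) (snd c))"
proof (intro conjI)
  show "\<forall>F \<in> Vd n d. \<exists>!c. represents n d F (fst c) (snd c)"
  proof
    fix F assume F: "F \<in> Vd n d"
    show "\<exists>!c. represents n d F (fst c) (snd c)"
      by (rule ex1I[of _ "(pcoeff n d F, vcoeff n d F)"])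
         (auto simp: represents_iff_coeffs[OF F assms(2)] prod_eq_iff)
  qed
qed (use finite_I1 finite_I2 card_I1 card_I2 pvec_in_Vd vvec_in_Vd assms in auto)

end
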